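(* Let $\mathbb{F}_q$ be the finite field with $q$ elements and let $f(T)=T^2+aT+b\in\mathbb{F}_q[T]$ be irreducible. Then for every $\gamma\in\mathbb{F}_q^{*}$, the cyclotomic function field $F(\Lambda_M)$ with modulus $M=f$ is $\mathbb{F}_q$-isomorphic to the function field $\mathbb{F}_q(v,y)$ defined over $\mathbb{F}_q$ by $$y^{q-1}=-\frac{\gamma v^2+av+(b/\gamma)}{v^q-v}.$$
   Context: Let $x$ be transcendental over $\mathbb{F}_q$, $R=\mathbb{F}_q[x]$, $F=\mathbb{F}_q(x)$, and $\overline{F}$ a fixed algebraic closure of $F$. Make $\overline{F}$ an $R$-module via $z^{g(x)}=g(\varphi)(z)$ for $g\in R$, where $\varphi\in\operatorname{End}_{\mathbb{F}_q}(\overline{F})$ is $\varphi(z)=z^q+xz$ (so $z^{\sum a_ix^i}=\sum a_i\varphi^i(z)$). For nonzero $M\in R$, $\Lambda_M=\{z\in\overline{F}: z^M=0\}$, and the cyclotomic function field with modulus $M$ is $F(\Lambda_M)$, the subfield of $\overline{F}$ generated over $F$ by $\Lambda_M$ (here $M$ is viewed as a polynomial in $x$). *)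

theory Defs
  imports "HOL-Computational_Algebra.Computational_Algebra"
begin

text \<open>Embedding of the constant field F_q (a finite field type 'f) into the
  fixed algebraically closed field 'a (the algebraic closure of F = F_q(x)).\<close>
definition is_field_hom :: "('f::field \<Rightarrow> 'a::field) \<Rightarrow> bool" where
  "is_field_hom \<iota> \<longleftrightarrow> \<iota> 1 = 1 \<and> (\<forall>u w. \<iota> (u + w) = \<iota> u + \<iota> w) \<and> (\<forall>u w. \<iota> (u * w) = \<iota> u * \<iota> w)"

definition is_subfield :: "'a::field set \<Rightarrow> bool" where
  "is_subfield K \<longleftrightarrow> 0 \<in> K \<and> 1 \<in> K \<and> (\<forall>u\<in>K. \<forall>w\<in>K. u + w \<in> K \<and> u * w \<in> K)
     \<and> (\<forall>u\<in>K. - u \<in> K \<and> inverse u \<in> K)"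

definition gen_field :: "'a::field set \<Rightarrow> 'a set" where
  "gen_field S = \<Inter>{K. is_subfield K \<and> S \<subseteq> K}"

definition transcendental_over :: "('f::field \<Rightarrow> 'a::field) \<Rightarrow> 'a \<Rightarrow> bool" where
  "transcendental_over \<iota> x \<longleftrightarrow> (\<forall>p::'f poly. p \<noteq> 0 \<longrightarrow> poly (map_poly \<iota> p) x \<noteq> 0)"

definition rat_fun_field :: "('f::field \<Rightarrow> 'a::field) \<Rightarrow> 'a \<Rightarrow> 'a set" where
  "rat_fun_field \<iota> x = gen_field (range \<iota> \<union> {x})"

definition algebraic_over :: "'a::field set \<Rightarrow> bool" where
  "algebraic_over K \<longleftrightarrow> (\<forall>z. \<exists>p::'a poly. p \<noteq> 0 \<and> (\<forall>i. coeff p i \<in> K) \<and> poly p z = 0)"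

text \<open>Carlitz action: z^g = \<Sum> a_i \<phi>^i(z) for g = \<Sum> a_i x^i, with \<phi>(z) = z^q + x z, q = |F_q|.\<close>
definition carlitz_phi :: "'a::field \<Rightarrow> nat \<Rightarrow> 'a \<Rightarrow> 'a" where
  "carlitz_phi x q z = z ^ q + x * z"

definition carlitz_act :: "('f::field \<Rightarrow> 'a::field) \<Rightarrow> 'a \<Rightarrow> nat \<Rightarrow> 'f poly \<Rightarrow> 'a \<Rightarrow> 'a" where
  "carlitz_act \<iota> x q g z = (\<Sum>i\<le>degree g. \<iota> (coeff g i) * (carlitz_phi x q ^^ i) z)"

definition carlitz_torsion :: "('f::field \<Rightarrow> 'a::field) \<Rightarrow> 'a \<Rightarrow> nat \<Rightarrow> 'f poly \<Rightarrow> 'a set" where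
  "carlitz_torsion \<iota> x q M = {z. carlitz_act \<iota> x q M z = 0}"

definition cyclotomic_ff :: "('f::field \<Rightarrow> 'a::field) \<Rightarrow> 'a \<Rightarrow> nat \<Rightarrow> 'f poly \<Rightarrow> 'a set" where
  "cyclotomic_ff \<iota> x q M = gen_field (rat_fun_field \<iota> x \<union> carlitz_torsion \<iota> x q M)"

text \<open>Evaluation of a bivariate polynomial Q(V,Y) (Y outer variable, coefficients in F_q[V])
  at (v,y), via \<iota>.\<close>
definition eval2 :: "('f::field \<Rightarrow> 'a::field) \<Rightarrow> 'f poly poly \<Rightarrow> 'a \<Rightarrow> 'a \<Rightarrow> 'a" where
  "eval2 \<iota> Q v y = poly (map_poly (\<lambda>c. poly (map_poly \<iota> c) v) Q) y"

text \<open>The field L (a subfield of 'a, with constants \<iota>(F_q)) is F_q-isomorphic to the function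
  field F_q(v,y) = Frac(F_q[V,Y]/(P)) defined by P(v,y)=0: there are v, y in L generating L over
  \<iota>(F_q) such that the kernel of evaluation F_q[V,Y] \<rightarrow> L at (v,y) is exactly the ideal (P).\<close>
definition Fq_iso_function_field :: "('f::field \<Rightarrow> 'a::field) \<Rightarrow> 'a set \<Rightarrow> 'f poly poly \<Rightarrow> bool" where
  "Fq_iso_function_field \<iota> L P \<longleftrightarrow>
     (\<exists>v\<in>L. \<exists>y\<in>L. gen_field (range \<iota> \<union> {v, y}) = L \<and>
        (\<forall>Q. eval2 \<iota> Q v y = 0 \<longleftrightarrow> P dvd Q))"

end

theory Submission
  imports Defs "HOL-Library.Cardinality"
begin

(* Let q = |F_q|, \<phi> z = z^q + x z and M = T^2 + a T + b. Choose w with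
   x (w^q - w) = w^(q+1) + a w + b and \<lambda> with \<lambda>^(q-1) = w - x. Then \<phi> \<lambda> = \<lambda> w and
   C_M(\<lambda>) = \<lambda> (w^(q+1) + a w + b - x (w^q - w)) = 0, so \<lambda> and \<phi> \<lambda> = \<lambda> w lie in
   the F_q-space \<Lambda>_M. As M has no root, w is not in F_q, so they are independent; since
   \<Lambda>_M has at most q^2 elements, \<Lambda>_M = F_q \<lambda> + F_q \<lambda> w. As x is a rational
   function of w, F(\<Lambda>_M) = F_q(w, \<lambda>) = F_q(v, \<lambda>) for v = w / \<gamma>, and substituting
   w = \<gamma> v into (w^q - w)(w - x) + w^2 + a w + b = 0 gives
   P(v, \<lambda>) = 0 for P(V, Y) = (V^q - V) Y^(q-1) + \<gamma> V^2 + a V + b/\<gamma>.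
   P generates all relations of (v, \<lambda>): v is transcendental because x is rational in v;
   P is irreducible over F_q(V) by Eisenstein's criterion at V for its reversal (V^q - V has
   a simple zero at 0, while \<gamma> V^2 + a V + b/\<gamma> does not vanish there); and P is
   primitive because \<gamma> V^2 + a V + b/\<gamma> has no root in F_q, where V^q - V splits. *)

section \<open>Field embeddings\<close>

lemma map_poly_add_hom:
  assumes "f 0 = 0" and "\<And>u w. f (u + w) = f u + f w"
  shows "map_poly f (p + q) = map_poly f p + map_poly f q"
  by (rule poly_eqI) (simp add: coeff_map_poly assms)

lemma map_poly_mult_hom:
  fixes f :: "'a::comm_semiring_1 \<Rightarrow> 'b::comm_semiring_1"
  assumes zero: "f 0 = 0" and add: "\<And>u w. f (u + w) = f u + f w"
    and mult: "\<And>u w. f (u * w) = f u * f w"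
  shows "map_poly f (p * q) = map_poly f p * map_poly f q"
proof (induction p)
  case (pCons c p)
  have "map_poly f (pCons c p * q) = map_poly f (smult c q + pCons 0 (p * q))"
    by simp
  also have "\<dots> = smult (f c) (map_poly f q) + pCons 0 (map_poly f p * map_poly f q)"
    by (simp add: map_poly_add_hom[OF zero add] map_poly_smult[OF zero mult]
        map_poly_pCons[of f, OF zero] pCons.IH zero)
  also have "\<dots> = map_poly f (pCons c p) * map_poly f q"
    by (simp add: map_poly_pCons[of f, OF zero])
  finally show ?case .
qed simp

locale field_embedding =
  fixes hom :: "'f::field \<Rightarrow> 'a::field"
  assumes is_field_hom: "is_field_hom hom"
begin

lemma hom_one [simp]: "hom 1 = 1"
  and hom_add [simp]: "hom (u + w) = hom u + hom w"
  and hom_mult [simp]: "hom (u * w) = hom u * hom w"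
  using is_field_hom by (simp_all add: is_field_hom_def)

lemma hom_zero [simp]: "hom 0 = 0"
  using hom_add[of 0 0] by (metis add_cancel_right_right)

lemma hom_uminus [simp]: "hom (- u) = - hom u"
  using hom_add[of "- u" u] by (simp add: eq_neg_iff_add_eq_0)

lemma hom_diff [simp]: "hom (u - w) = hom u - hom w"
  using hom_add[of u "- w"] by simp

lemma hom_power [simp]: "hom (u ^ k) = hom u ^ k"
  by (induction k) simp_all

lemma hom_of_nat [simp]: "hom (of_nat k) = of_nat k"
  by (induction k) simp_all

lemma hom_eq_0_iff [simp]: "hom u = 0 \<longleftrightarrow> u = 0"
proof
  assume "hom u = 0"
  show "u = 0"
  proof (rule ccontr)
    assume "u \<noteq> 0"
    then have "hom u * hom (inverse u) = 1"
      by (simp flip: hom_mult)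
    with \<open>hom u = 0\<close> show False
      by simp
  qed
qed simp

lemma inj_hom: "inj hom"
proof (rule injI)
  show "u = w" if "hom u = hom w" for u w
    using that hom_eq_0_iff[of "u - w"] by simp
qed

lemma hom_inverse [simp]: "hom (inverse u) = inverse (hom u)"
proof (cases "u = 0")
  case False
  then have "hom u * hom (inverse u) = 1"
    by (simp flip: hom_mult)
  then show ?thesis
    by (rule inverse_unique[symmetric])
qed simp

lemma hom_divide [simp]: "hom (u / w) = hom u / hom w"
  by (simp add: divide_inverse)

lemma map_poly_hom_add [simp]: "map_poly hom (p + q) = map_poly hom p + map_poly hom q"
  by (rule map_poly_add_hom) simp_all

lemma map_poly_hom_mult [simp]: "map_poly hom (p * q) = map_poly hom p * map_poly hom q"
  by (rule map_poly_mult_hom) simp_all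

lemma map_poly_hom_diff [simp]: "map_poly hom (p - q) = map_poly hom p - map_poly hom q"
  by (rule poly_eqI) (simp add: coeff_map_poly)

lemma map_poly_hom_power [simp]: "map_poly hom (p ^ k) = map_poly hom p ^ k"
  by (induction k) simp_all

lemma eval2_add [simp]: "eval2 hom (Q + R) v y = eval2 hom Q v y + eval2 hom R v y"
  unfolding eval2_def by (subst map_poly_add_hom) simp_all

lemma eval2_mult [simp]: "eval2 hom (Q * R) v y = eval2 hom Q v y * eval2 hom R v y"
  unfolding eval2_def by (subst map_poly_mult_hom) simp_all

lemma eval2_smult [simp]: "eval2 hom (smult c Q) v y = poly (map_poly hom c) v * eval2 hom Q v y"
  unfolding eval2_def by (subst map_poly_smult) simp_all

lemma eval2_monom [simp]: "eval2 hom (monom c k) v y = poly (map_poly hom c) v * y ^ k"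
  unfolding eval2_def by (simp add: map_poly_monom poly_monom)

end

section \<open>Finite fields\<close>

lemma add_power_eq_if_binomials_vanish:
  fixes u w :: "'a::comm_semiring_1"
  assumes "0 < n" and "\<And>k. 0 < k \<Longrightarrow> k < n \<Longrightarrow> of_nat (n choose k) = (0 :: 'a)"
  shows "(u + w) ^ n = u ^ n + w ^ n"
proof -
  have "(u + w) ^ n = (\<Sum>k\<le>n. of_nat (n choose k) * u ^ k * w ^ (n - k))"
    by (rule binomial_ring)
  also have "\<dots> = (\<Sum>k\<in>{0, n}. of_nat (n choose k) * u ^ k * w ^ (n - k))"
    using assms(2) by (intro sum.mono_neutral_right) auto
  finally show ?thesis
    using assms(1) by (simp add: add.commute)
qed

lemma two_le_card_UNIV_field: "2 \<le> card (UNIV :: 'f::{finite,field} set)"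
proof -
  have "card {0, 1 :: 'f} \<le> CARD('f)"
    by (rule card_mono) simp_all
  then show ?thesis
    by simp
qed

lemma finite_field_power_card_eq_self:
  fixes u :: "'f::{finite,field}"
  shows "u ^ CARD('f) = u"
proof (cases "u = 0")
  case True
  then show ?thesis
    using two_le_card_UNIV_field[where 'f='f] by simp
next
  case False
  define U where "U = UNIV - {0 :: 'f}"
  have "bij_betw ((*) u) U U"
    using False unfolding U_def by (intro bij_betwI[where g = "\<lambda>g. g / u"]) auto
  then have "prod ((*) u) U = prod (\<lambda>g. g) U"
    by (rule prod.reindex_bij_betw)
  then have "u ^ card U * prod (\<lambda>g. g) U = 1 * prod (\<lambda>g. g) U"
    by (simp add: prod.distrib)
  moreover have "prod (\<lambda>g. g) U \<noteq> 0"
    by (simp add: U_def)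
  ultimately have "u ^ card U = 1"
    by (simp only: mult_cancel_right) simp
  moreover have "CARD('f) = Suc (card U)"
    using two_le_card_UNIV_field[where 'f='f] by (simp add: U_def card_Diff_singleton)
  ultimately show ?thesis
    by simp
qed

lemma finite_field_binomial_eq_0:
  assumes "0 < k" and "k < card (UNIV :: 'f::{finite,field} set)"
  shows "(of_nat (CARD('f) choose k) :: 'f) = 0"
proof -
  let ?q = "CARD('f)"
  have "[:1, 1:] ^ ?q = monom 1 ?q + (1 :: 'f poly)"
  proof (rule poly_eqI_degree_lead_coeff[where n = ?q and A = UNIV])
    show "coeff ([:1, 1:] ^ ?q) ?q = coeff (monom 1 ?q + (1 :: 'f poly)) ?q"
      using two_le_card_UNIV_field[where 'f='f] coeff_linear_poly_power[of ?q ?q "1 :: 'f" 1]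
      by simp
    show "degree ([:1, 1:] ^ ?q :: 'f poly) \<le> ?q"
      using degree_power_le[of "[:1, 1 :: 'f:]" ?q] by simp
    show "degree (monom 1 ?q + (1 :: 'f poly)) \<le> ?q"
      by (intro degree_add_le) (simp_all add: degree_monom_le)
    show "poly ([:1, 1:] ^ ?q) c = poly (monom 1 ?q + 1) c" for c :: 'f
      using finite_field_power_card_eq_self[of "1 + c"] finite_field_power_card_eq_self[of c]
      by (simp add: poly_monom add.commute)
  qed simp
  then have "coeff ([:1, 1:] ^ ?q) k = coeff (monom 1 ?q + (1 :: 'f poly)) k"
    by simp
  then show ?thesis
    using assms coeff_linear_poly_power[of k ?q "1 :: 'f" 1] by (simp add: coeff_1)
qed

abbreviation vanishing_poly :: "'f::{finite,field} poly" where
  "vanishing_poly \<equiv> [:0, 1:] ^ CARD('f) - [:0, 1:]"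

lemma vanishing_poly_monom: "(vanishing_poly :: 'f::{finite,field} poly) = monom 1 CARD('f) - monom 1 1"
  by (simp add: monom_altdef)

lemma degree_vanishing_poly: "degree (vanishing_poly :: 'f::{finite,field} poly) = CARD('f)"
proof -
  have "(vanishing_poly :: 'f poly) = monom 1 CARD('f) + monom (-1) 1"
    unfolding vanishing_poly_monom by (simp add: minus_monom)
  then show ?thesis
    using two_le_card_UNIV_field[where 'f='f]
    by (simp add: degree_add_eq_left degree_monom_eq)
qed

lemma vanishing_poly_nonzero: "(vanishing_poly :: 'f::{finite,field} poly) \<noteq> 0"
  using degree_vanishing_poly[where 'f='f] by auto

lemma coeff_vanishing_poly:
  "coeff (vanishing_poly :: 'f::{finite,field} poly) 0 = 0"
  "coeff (vanishing_poly :: 'f::{finite,field} poly) 1 = -1"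
  unfolding vanishing_poly_monom using two_le_card_UNIV_field[where 'f='f] by simp_all

lemma vanishing_poly_dvd_iff:
  fixes t :: "'f::{finite,field} poly"
  shows "vanishing_poly dvd t \<longleftrightarrow> (\<forall>c. poly t c = 0)"
proof
  assume "vanishing_poly dvd t"
  then show "\<forall>c. poly t c = 0"
    by (auto simp: dvd_def finite_field_power_card_eq_self)
next
  assume vanishes: "\<forall>c. poly t c = 0"
  have "t mod vanishing_poly = 0"
  proof (rule poly_eqI_degree[where A = UNIV])
    show "poly (t mod vanishing_poly) c = poly 0 c" for c
      using vanishes arg_cong[OF div_mult_mod_eq[of t vanishing_poly], of "\<lambda>p. poly p c"]
      by (simp add: finite_field_power_card_eq_self)
    show "degree (t mod vanishing_poly) < card (UNIV :: 'f set)"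
      using degree_mod_less[OF vanishing_poly_nonzero, of t] degree_vanishing_poly[where 'f='f]
      by auto
  qed simp
  then show "vanishing_poly dvd t"
    by (simp add: mod_eq_0_iff_dvd)
qed

lemma finite_polys_degree_less: "finite {r :: 'k::{finite,zero} poly. degree r < m}"
proof -
  have "{r :: 'k poly. degree r < m} \<subseteq> Poly ` {xs. set xs \<subseteq> UNIV \<and> length xs \<le> m}"
  proof
    fix r :: "'k poly"
    assume "r \<in> {r. degree r < m}"
    then have "length (coeffs r) \<le> m"
      by (cases "r = 0") (auto simp: length_coeffs_degree)
    then show "r \<in> Poly ` {xs. set xs \<subseteq> UNIV \<and> length xs \<le> m}"
      by (intro image_eqI[of _ _ "coeffs r"]) auto
  qed
  moreover have "finite (Poly ` {xs :: 'k list. set xs \<subseteq> UNIV \<and> length xs \<le> m})"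
    by (intro finite_imageI finite_lists_length_le) simp
  ultimately show ?thesis
    by (rule finite_subset)
qed

lemma is_subfield_gen_field: "is_subfield (gen_field S)"
  unfolding gen_field_def is_subfield_def by auto

lemma subset_gen_field: "S \<subseteq> gen_field S"
  unfolding gen_field_def by auto

lemma gen_field_least: "is_subfield K \<Longrightarrow> S \<subseteq> K \<Longrightarrow> gen_field S \<subseteq> K"
  unfolding gen_field_def by auto

context
  fixes K :: "'a::field set"
  assumes K: "is_subfield K"
begin

lemma subfield_add: "u \<in> K \<Longrightarrow> w \<in> K \<Longrightarrow> u + w \<in> K"
  using K by (simp add: is_subfield_def)

lemma subfield_mult: "u \<in> K \<Longrightarrow> w \<in> K \<Longrightarrow> u * w \<in> K"
  using K by (simp add: is_subfield_def)

lemma subfield_diff: "u \<in> K \<Longrightarrow> w \<in> K \<Longrightarrow> u - w \<in> K"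
  using K subfield_add[of u "- w"] by (simp add: is_subfield_def)

lemma subfield_divide: "u \<in> K \<Longrightarrow> w \<in> K \<Longrightarrow> u / w \<in> K"
  using K subfield_mult[of u "inverse w"] by (simp add: is_subfield_def divide_inverse)

lemma subfield_power: "u \<in> K \<Longrightarrow> u ^ k \<in> K"
  using K by (induction k) (simp_all add: subfield_mult is_subfield_def)

end

locale finite_field_embedding = field_embedding hom for hom :: "'f::{finite,field} \<Rightarrow> 'a::field"
begin

lemma frobenius_add: "(u + w :: 'a) ^ CARD('f) = u ^ CARD('f) + w ^ CARD('f)"
proof (rule add_power_eq_if_binomials_vanish)
  show "of_nat (CARD('f) choose k) = (0 :: 'a)" if "0 < k" and "k < CARD('f)" for k
    using finite_field_binomial_eq_0[OF that] hom_of_nat[of "CARD('f) choose k"] by simp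
qed simp

lemma hom_power_card: "hom c ^ CARD('f) = hom c"
  by (simp flip: hom_power add: finite_field_power_card_eq_self)

lemma power_card_eq_self_iff: "u ^ CARD('f) = u \<longleftrightarrow> u \<in> range hom"
proof -
  define p :: "'a poly" where "p = monom 1 CARD('f) - [:0, 1:]"
  have roots: "{u. poly p u = 0} = {u :: 'a. u ^ CARD('f) = u}"
    by (simp add: p_def poly_monom)
  have "p = monom 1 CARD('f) + [:0, -1:]"
    by (simp add: p_def)
  then have "degree p = CARD('f)"
    using two_le_card_UNIV_field[where 'f='f] by (simp add: degree_add_eq_left degree_monom_eq)
  then have "p \<noteq> 0"
    by auto
  have "range hom \<subseteq> {u :: 'a. u ^ CARD('f) = u}"
    using hom_power_card by auto
  moreover have "finite {u :: 'a. u ^ CARD('f) = u}"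
    using poly_roots_finite[OF \<open>p \<noteq> 0\<close>] unfolding roots .
  moreover have "card {u :: 'a. u ^ CARD('f) = u} \<le> card (range hom)"
    using card_poly_roots_bound[OF \<open>p \<noteq> 0\<close>] roots \<open>degree p = CARD('f)\<close> inj_hom
    by (simp add: card_image)
  ultimately have "range hom = {u :: 'a. u ^ CARD('f) = u}"
    by (intro card_seteq) auto
  then show ?thesis
    by auto
qed

lemma finite_range_eval_if_root:
  assumes "p \<noteq> 0" and "poly (map_poly hom p) v = 0"
  shows "finite (range (\<lambda>r. poly (map_poly hom r) v))"
proof -
  let ?E = "\<lambda>r. poly (map_poly hom r) v"
  have "range ?E \<subseteq> ?E ` {r. degree r < Suc (degree p)}"
  proof clarify
    fix r
    have "?E r = ?E (r div p * p + r mod p)"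
      by simp
    also have "\<dots> = ?E (r mod p)"
      using assms(2) by (simp only: map_poly_hom_add map_poly_hom_mult poly_add poly_mult) simp
    finally show "?E r \<in> ?E ` {r. degree r < Suc (degree p)}"
      using degree_mod_less[OF assms(1), of r] by fastforce
  qed
  then show ?thesis
    using finite_polys_degree_less by (rule finite_subset[OF _ finite_imageI])
qed

lemma transcendental_over_if_rational:
  assumes x: "transcendental_over hom x"
    and d: "poly (map_poly hom d) v \<noteq> 0"
    and x_eq: "x * poly (map_poly hom d) v = poly (map_poly hom e) v"
  shows "transcendental_over hom v"
  unfolding transcendental_over_def
proof (intro allI impI notI)
  fix p :: "'f poly"
  assume "p \<noteq> 0" and "poly (map_poly hom p) v = 0"
  define A where "A = range (\<lambda>r. poly (map_poly hom r) v)"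
  have "finite A"
    unfolding A_def by (rule finite_range_eval_if_root) fact+
  have mult_A: "s \<in> A \<Longrightarrow> t \<in> A \<Longrightarrow> s * t \<in> A" for s t
    unfolding A_def by (auto simp flip: poly_mult map_poly_hom_mult)
  have "(*) (poly (map_poly hom d) v) ` A = A"
    using d mult_A by (intro endo_inj_surj \<open>finite A\<close>) (auto simp: A_def inj_on_def)
  moreover have "poly (map_poly hom e) v \<in> A"
    unfolding A_def by simp
  ultimately obtain t where "t \<in> A" and "poly (map_poly hom d) v * t = x * poly (map_poly hom d) v"
    using x_eq by (metis imageE)
  then have "x \<in> A"
    using d by (simp add: mult.commute)
  then have "range ((^) x) \<subseteq> A"
    unfolding A_def by (auto simp flip: poly_power map_poly_hom_power)
  then have "\<not> inj ((^) x)"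
    using \<open>finite A\<close> finite_subset infinite_UNIV_nat finite_imageD by blast
  then obtain i j where "i \<noteq> j" and "x ^ i = x ^ j"
    unfolding inj_def by blast
  then have "monom 1 i - monom 1 j \<noteq> (0 :: 'f poly)"
    and "poly (map_poly hom (monom 1 i - monom 1 j)) x = 0"
    by (auto simp: map_poly_monom poly_monom dest: arg_cong[of _ _ "\<lambda>p. coeff p i"])
  with x show False
    unfolding transcendental_over_def by blast
qed

end

section \<open>An Eisenstein criterion at \<open>V = 0\<close>\<close>

lemma degree_monom_plus_const:
  assumes "D \<noteq> 0"
  shows "degree (monom D n + monom N 0) = n"
  using assms by (cases n) (simp_all add: degree_add_eq_left degree_monom_eq monom_0)

lemma lead_coeff_monom_plus_const:
  assumes "D \<noteq> 0" and "0 < n"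
  shows "lead_coeff (monom D n + monom N 0) = D"
  using assms by (simp add: degree_monom_plus_const)

lemma smult_X_if_coeffs_vanish_at_0:
  fixes R :: "'k::field poly poly"
  assumes "map_poly (\<lambda>c. coeff c 0) R = 0"
  shows "R = smult [:0, 1:] (map_poly (\<lambda>c. c div [:0, 1:]) R)"
proof (rule poly_eqI)
  fix i
  have "coeff (coeff R i) 0 = 0"
    using arg_cong[OF assms, of "\<lambda>Q. coeff Q i"] by (simp add: coeff_map_poly)
  then have "[:0, 1:] dvd coeff R i"
    using poly_eq_0_iff_dvd[of "coeff R i" 0] by (simp add: poly_0_coeff_0)
  then show "coeff R i = coeff (smult [:0, 1:] (map_poly (\<lambda>c. c div [:0, 1:]) R)) i"
    using dvd_mult_div_cancel[of "[:0, 1:]" "coeff R i"] by (simp add: coeff_map_poly)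
qed

(* Eisenstein's criterion at the prime V for the reversed polynomial N Y^n + D, stated for
   nonzero multiples \<alpha> P so that no fraction field of 'k[V] is needed. *)
lemma eisenstein_reversed:
  fixes D N \<alpha> :: "'k::field poly" and R S :: "'k poly poly"
  assumes D: "coeff D 0 = 0" "coeff D 1 \<noteq> 0" and N: "coeff N 0 \<noteq> 0"
    and "\<alpha> \<noteq> 0" and "R * S = smult \<alpha> (monom D n + monom N 0)"
  shows "degree R = 0 \<or> degree S = 0"
  using assms(4,5)
proof (induction "degree \<alpha>" arbitrary: \<alpha> R S rule: less_induct)
  case less
  let ?P = "monom D n + monom N 0" and ?red = "map_poly (\<lambda>c :: 'k poly. coeff c 0)"
  have red_mult: "?red (A * B) = ?red A * ?red B" for A B
    by (rule map_poly_mult_hom) (simp_all add: coeff_mult_0)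
  have "?red ?P = [:coeff N 0:]"
    using D(1) by (simp add: map_poly_add_hom map_poly_monom monom_0 map_poly_pCons)
  moreover have red_smult: "?red (smult c A) = smult (coeff c 0) (?red A)" for c A
    by (rule map_poly_smult) (simp_all add: coeff_mult_0)
  ultimately have red_RS: "?red R * ?red S = [:coeff \<alpha> 0 * coeff N 0:]"
    using arg_cong[OF less.prems(2), of ?red] by (simp add: red_mult)
  show ?case
  proof (cases "coeff \<alpha> 0 = 0")
    case True
    then obtain \<alpha>' where \<alpha>': "\<alpha> = [:0, 1:] * \<alpha>'"
      using poly_eq_0_iff_dvd[of \<alpha> 0] by (auto simp: poly_0_coeff_0 elim: dvdE)
    with less.prems(1) have "\<alpha>' \<noteq> 0" and "degree \<alpha>' < degree \<alpha>"
      by (auto simp: degree_mult_eq)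
    have trivial_reduction: "degree R' = 0 \<or> degree S' = 0"
      if "?red R' = 0" and "R' * S' = smult \<alpha> ?P" for R' S'
    proof -
      define R'' where "R'' = map_poly (\<lambda>c. c div [:0, 1:]) R'"
      have R': "R' = smult [:0, 1:] R''"
        unfolding R''_def by (rule smult_X_if_coeffs_vanish_at_0) fact
      have "smult [:0, 1:] (R'' * S') = smult [:0, 1:] (smult \<alpha>' ?P)"
        using that(2) unfolding R' \<alpha>' by (simp add: mult.assoc)
      then have "R'' * S' = smult \<alpha>' ?P"
        by (rule smult_cancel[rotated]) simp
      then have "degree R'' = 0 \<or> degree S' = 0"
        by (rule less.hyps[OF \<open>degree \<alpha>' < degree \<alpha>\<close> \<open>\<alpha>' \<noteq> 0\<close>])
      then show ?thesis
        by (simp add: R')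
    qed
    have "?red R = 0 \<or> ?red S = 0"
      using red_RS True by simp
    then show ?thesis
    proof
      assume "?red R = 0"
      then show ?thesis
        using less.prems(2) by (rule trivial_reduction)
    next
      assume "?red S = 0"
      moreover have "S * R = smult \<alpha> ?P"
        using less.prems(2) by (simp only: mult.commute)
      ultimately have "degree S = 0 \<or> degree R = 0"
        by (rule trivial_reduction)
      then show ?thesis
        by (simp only: disj_commute)
    qed
  next
    case False
    show ?thesis
    proof (rule ccontr)
      assume "\<not> (degree R = 0 \<or> degree S = 0)"
      then have R: "degree R \<noteq> 0" and S: "degree S \<noteq> 0"
        by auto
      have "?red R \<noteq> 0" and "?red S \<noteq> 0" and "degree (?red R * ?red S) = 0"
        using red_RS False N by auto
      then have "degree (?red R) = 0" and "degree (?red S) = 0"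
        by (simp_all add: degree_mult_eq)
      moreover have "coeff (lead_coeff A) 0 = 0" if "degree (?red A) = 0" and "degree A \<noteq> 0" for A
        using that coeff_eq_0[of "?red A" "degree A"] by (simp add: coeff_map_poly)
      ultimately have "coeff (lead_coeff R) 0 = 0" and "coeff (lead_coeff S) 0 = 0"
        using R S by simp_all
      then obtain k l where "lead_coeff R = [:0, 1:] * k" and "lead_coeff S = [:0, 1:] * l"
        using poly_eq_0_iff_dvd[of "lead_coeff R" 0] poly_eq_0_iff_dvd[of "lead_coeff S" 0]
        by (auto simp: poly_0_coeff_0 elim!: dvdE)
      then have lead_RS: "lead_coeff (R * S) = monom 1 2 * (k * l)"
        by (simp add: lead_coeff_mult monom_altdef power2_eq_square mult_ac)
      have "D \<noteq> 0"
        using D(2) by auto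
      have "2 \<le> degree (R * S)"
        using R S by (subst degree_mult_eq) auto
      then have "0 < n"
        using less.prems by (auto simp: degree_monom_plus_const[OF \<open>D \<noteq> 0\<close>])
      then have "lead_coeff (R * S) = \<alpha> * D"
        unfolding less.prems(2) lead_coeff_smult
        by (simp only: lead_coeff_monom_plus_const[OF \<open>D \<noteq> 0\<close>])
      then have "\<alpha> * D = monom 1 2 * (k * l)"
        using lead_RS by simp
      then have "coeff (\<alpha> * D) 1 = 0"
        by (simp add: coeff_monom_mult)
      moreover have "coeff (\<alpha> * D) 1 = coeff \<alpha> 0 * coeff D 1"
        using D(1) by (simp add: coeff_mult numeral_2_eq_2 atMost_Suc)
      ultimately show False
        using False D(2) by simp
    qed
  qed
qed

section \<open>The relations of a point on \<open>(V^q - V) Y^n + N(V) = 0\<close>\<close>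

abbreviation curve_poly :: "nat \<Rightarrow> 'f::{finite,field} poly \<Rightarrow> 'f poly poly" where
  "curve_poly n N \<equiv> monom vanishing_poly n + monom N 0"

lemma dvd_if_dvd_smult_vanishing_poly:
  fixes N :: "'f::{finite,field} poly"
  assumes N: "\<And>c. poly N c \<noteq> 0" and "curve_poly n N dvd smult vanishing_poly Z"
  shows "curve_poly n N dvd Z"
proof -
  obtain T where T: "smult vanishing_poly Z = curve_poly n N * T"
    using assms(2) by (rule dvdE)
  have "curve_poly n N * T = smult vanishing_poly (monom 1 n * T) + smult N T"
    by (simp add: distrib_right monom_0 smult_monom flip: mult_smult_left)
  then have "smult N T = smult vanishing_poly (Z - monom 1 n * T)"
    using T by (simp add: smult_diff_right)
  then have coeff_T: "N * coeff T i = vanishing_poly * coeff (Z - monom 1 n * T) i" for i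
    by (metis coeff_smult)
  have dvd_coeff_T: "vanishing_poly dvd coeff T i" for i
    unfolding vanishing_poly_dvd_iff
  proof
    fix c
    have "poly N c * poly (coeff T i) c = 0"
      using arg_cong[OF coeff_T[of i], of "\<lambda>p. poly p c"]
      by (simp add: finite_field_power_card_eq_self)
    then show "poly (coeff T i) c = 0"
      using N by simp
  qed
  define T' where "T' = map_poly (\<lambda>c. c div vanishing_poly) T"
  have "T = smult vanishing_poly T'"
    using dvd_coeff_T by (intro poly_eqI) (simp add: T'_def coeff_map_poly)
  then have "smult vanishing_poly Z = smult vanishing_poly (curve_poly n N * T')"
    using T by (metis mult_smult_right)
  then have "Z = curve_poly n N * T'"
    by (rule smult_cancel[rotated]) (rule vanishing_poly_nonzero)
  then show ?thesis
    by simp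
qed

lemma dvd_if_dvd_smult_vanishing_poly_power:
  fixes N :: "'f::{finite,field} poly"
  assumes N: "\<And>c. poly N c \<noteq> 0"
  shows "curve_poly n N dvd smult (vanishing_poly ^ e) Z \<Longrightarrow> curve_poly n N dvd Z"
proof (induction e arbitrary: Z)
  case (Suc e)
  then show ?case
    using dvd_if_dvd_smult_vanishing_poly[OF N, of n "smult (vanishing_poly ^ e) Z"]
    by (simp add: mult.commute)
qed simp

locale curve_point = finite_field_embedding \<iota> for \<iota> :: "'f::{finite,field} \<Rightarrow> 'a::field" +
  fixes v y :: 'a and n :: nat and N :: "'f poly"
  assumes transcendental_v: "transcendental_over \<iota> v"
    and N_root_free: "\<And>c. poly N c \<noteq> 0"
    and on_curve: "eval2 \<iota> (curve_poly n N) v y = 0"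
begin

lemma eval2_const_nonzero: "c \<noteq> 0 \<Longrightarrow> eval2 \<iota> [:c:] v y \<noteq> 0"
  using transcendental_v by (simp add: eval2_def transcendental_over_def map_poly_pCons)

lemma exponent_pos: "0 < n"
proof (rule ccontr)
  assume "\<not> 0 < n"
  then have "curve_poly n N = [:vanishing_poly + N:]"
    by (simp add: monom_0)
  moreover have "vanishing_poly + N \<noteq> 0"
    using N_root_free[of 0] coeff_vanishing_poly(1)[where 'f='f]
    by (metis add_0 coeff_0 coeff_add poly_0_coeff_0)
  ultimately show False
    using on_curve eval2_const_nonzero by metis
qed

lemma degree_curve_poly: "degree (curve_poly n N) = n"
  using vanishing_poly_nonzero by (rule degree_monom_plus_const)

lemma lead_coeff_curve_poly: "lead_coeff (curve_poly n N) = vanishing_poly"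
  using vanishing_poly_nonzero exponent_pos by (rule lead_coeff_monom_plus_const)

lemma curve_poly_nonzero: "curve_poly n N \<noteq> 0"
  using lead_coeff_curve_poly vanishing_poly_nonzero by (metis coeff_0)

lemma degree_ge_if_eval2_eq_0: "R \<noteq> 0 \<Longrightarrow> eval2 \<iota> R v y = 0 \<Longrightarrow> n \<le> degree R"
proof (induction "degree R" arbitrary: R rule: less_induct)
  case less
  show ?case
  proof (rule ccontr)
    assume "\<not> n \<le> degree R"
    obtain T r where pd: "pseudo_divmod (curve_poly n N) R = (T, r)"
      by fastforce
    define c where "c = lead_coeff R ^ (Suc (degree (curve_poly n N)) - degree R)"
    have "c \<noteq> 0"
      using less.prems(1) by (simp add: c_def)
    have division: "smult c (curve_poly n N) = R * T + r"
      using pseudo_divmod(1)[OF less.prems(1) pd] by (simp add: c_def)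
    have "eval2 \<iota> r v y = 0"
      using arg_cong[OF division, of "\<lambda>Q. eval2 \<iota> Q v y"] on_curve less.prems(2) by simp
    moreover have "r = 0 \<or> degree r < degree R"
      by (rule pseudo_divmod(2)[OF less.prems(1) pd])
    ultimately have "r = 0"
      using less.hyps \<open>\<not> n \<le> degree R\<close> by fastforce
    then have "R * T = smult c (curve_poly n N)"
      using division by simp
    moreover have "coeff N 0 \<noteq> 0"
      using N_root_free[of 0] by (simp add: poly_0_coeff_0)
    ultimately have "degree R = 0 \<or> degree T = 0"
      using coeff_vanishing_poly[where 'f='f] \<open>c \<noteq> 0\<close> by (intro eisenstein_reversed) simp_all
    then show False
    proof
      assume "degree R = 0"
      then show False
        using less.prems eval2_const_nonzero by (metis degree_eq_zeroE pCons_eq_0_iff)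
    next
      assume "degree T = 0"
      moreover have "T \<noteq> 0"
        using \<open>R * T = smult c (curve_poly n N)\<close> \<open>c \<noteq> 0\<close> curve_poly_nonzero by auto
      ultimately have "degree R = n"
        using \<open>R * T = smult c (curve_poly n N)\<close> less.prems(1) \<open>c \<noteq> 0\<close>
        by (metis add.right_neutral degree_curve_poly degree_mult_eq degree_smult_eq)
      with \<open>\<not> n \<le> degree R\<close> show False
        by simp
    qed
  qed
qed

theorem eval2_eq_0_iff_dvd: "eval2 \<iota> Q v y = 0 \<longleftrightarrow> curve_poly n N dvd Q"
proof
  assume "eval2 \<iota> Q v y = 0"
  obtain T r where pd: "pseudo_divmod Q (curve_poly n N) = (T, r)"
    by fastforce
  define e where "e = Suc (degree Q) - degree (curve_poly n N)"
  have division: "smult (vanishing_poly ^ e) Q = curve_poly n N * T + r"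
    using pseudo_divmod(1)[OF curve_poly_nonzero pd] unfolding lead_coeff_curve_poly e_def .
  have "eval2 \<iota> r v y = 0"
    using arg_cong[OF division, of "\<lambda>Q. eval2 \<iota> Q v y"] on_curve \<open>eval2 \<iota> Q v y = 0\<close> by simp
  moreover have "r = 0 \<or> degree r < n"
    using pseudo_divmod(2)[OF curve_poly_nonzero pd] by (simp add: degree_curve_poly)
  ultimately have "r = 0"
    using degree_ge_if_eval2_eq_0[of r] by fastforce
  then have "curve_poly n N dvd smult (vanishing_poly ^ e) Q"
    using division by (metis add.right_neutral dvd_triv_left)
  then show "curve_poly n N dvd Q"
    by (rule dvd_if_dvd_smult_vanishing_poly_power[OF N_root_free])
next
  assume "curve_poly n N dvd Q"
  then show "eval2 \<iota> Q v y = 0"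
    using on_curve by (auto elim!: dvdE)
qed

end

section \<open>The Carlitz module of a monic irreducible quadratic\<close>

lemma irreducible_imp_no_root:
  fixes p :: "'k::field poly"
  assumes "irreducible p" and "1 < degree p"
  shows "poly p c \<noteq> 0"
proof
  assume "poly p c = 0"
  then obtain g where g: "p = [:-c, 1:] * g"
    by (auto simp: poly_eq_0_iff_dvd elim: dvdE)
  have "g \<noteq> 0"
    using g assms(2) by auto
  then have "degree p = 1 + degree g"
    unfolding g by (subst degree_mult_eq) auto
  with irreducibleD[OF assms(1) g] assms(2) \<open>g \<noteq> 0\<close> show False
    by (auto simp: is_unit_iff_degree)
qed

lemma alg_closed_carlitz_parameters:
  fixes x \<alpha> \<beta> :: "'a::alg_closed_field"
  assumes "2 \<le> q"
  obtains w lam where "x * (w ^ q - w) = w ^ (q + 1) + \<alpha> * w + \<beta>" and "lam ^ (q - 1) = w - x"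
proof -
  let ?p = "monom 1 (q + 1) + (monom (- x) q + [:\<beta>, x + \<alpha>:])"
  have "degree (monom (- x) q + [:\<beta>, x + \<alpha>:]) \<le> q"
    using assms by (intro degree_add_le order.trans[OF degree_monom_le]) (auto simp: degree_pCons_eq_if)
  then have "degree ?p = q + 1"
    by (simp add: degree_add_eq_left degree_monom_eq)
  then obtain w where "poly ?p w = 0"
    using alg_closed_imp_poly_has_root[of ?p] by auto
  moreover have "x * (w ^ q - w) - (w ^ (q + 1) + \<alpha> * w + \<beta>) = - poly ?p w"
    by (simp add: poly_monom algebra_simps)
  ultimately have "x * (w ^ q - w) = w ^ (q + 1) + \<alpha> * w + \<beta>"
    by simp
  moreover obtain lam where "lam ^ (q - 1) = w - x"
    using nth_root_exists[of "q - 1" "w - x"] assms by auto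
  ultimately show ?thesis
    using that by blast
qed

locale quadratic_carlitz = finite_field_embedding \<iota> for \<iota> :: "'f::{finite,field} \<Rightarrow> 'a::field" +
  fixes x :: 'a and a b :: 'f
  assumes transcendental_x: "transcendental_over \<iota> x"
    and irreducible_M: "irreducible [:b, a, 1:]"
begin

abbreviation carlitz_M :: "'a \<Rightarrow> 'a" where
  "carlitz_M \<equiv> carlitz_act \<iota> x CARD('f) [:b, a, 1:]"

abbreviation Lambda_M :: "'a set" where
  "Lambda_M \<equiv> carlitz_torsion \<iota> x CARD('f) [:b, a, 1:]"

lemma M_root_free: "poly [:b, a, 1:] c \<noteq> 0"
  using irreducible_M by (rule irreducible_imp_no_root) simp

lemma carlitz_phi_add: "carlitz_phi x CARD('f) (u + w) = carlitz_phi x CARD('f) u + carlitz_phi x CARD('f) w"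
  by (simp add: carlitz_phi_def frobenius_add algebra_simps)

lemma carlitz_phi_hom_mult: "carlitz_phi x CARD('f) (\<iota> c * u) = \<iota> c * carlitz_phi x CARD('f) u"
  by (simp add: carlitz_phi_def power_mult_distrib hom_power_card algebra_simps)

lemma carlitz_M_eq:
  "carlitz_M z = \<iota> b * z + \<iota> a * carlitz_phi x CARD('f) z
    + carlitz_phi x CARD('f) (carlitz_phi x CARD('f) z)"
  by (simp add: carlitz_act_def numeral_2_eq_2 algebra_simps)

lemma carlitz_M_add: "carlitz_M (u + w) = carlitz_M u + carlitz_M w"
  by (simp add: carlitz_M_eq carlitz_phi_add algebra_simps)

lemma carlitz_M_hom_mult: "carlitz_M (\<iota> c * u) = \<iota> c * carlitz_M u"
  unfolding carlitz_M_eq carlitz_phi_hom_mult by (simp add: algebra_simps)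

lemma carlitz_M_phi: "carlitz_M (carlitz_phi x CARD('f) u) = carlitz_phi x CARD('f) (carlitz_M u)"
  by (simp add: carlitz_M_eq carlitz_phi_add carlitz_phi_hom_mult)

lemma Lambda_M_finite_card:
  "finite Lambda_M" "card Lambda_M \<le> CARD('f) * CARD('f)"
proof -
  let ?q = "CARD('f)"
  define p where "p = monom 1 (?q * ?q) + (monom (x ^ ?q + x + \<iota> a) ?q + monom (x * x + \<iota> a * x + \<iota> b) 1)"
  have "carlitz_M z = poly p z" for z
  proof -
    have "carlitz_phi x CARD('f) (carlitz_phi x CARD('f) z) = z ^ (?q * ?q) + (x ^ ?q + x) * z ^ ?q + x * x * z"
      by (simp add: carlitz_phi_def frobenius_add power_mult_distrib power_mult algebra_simps)
    then show ?thesis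
      by (simp add: carlitz_M_eq p_def poly_monom carlitz_phi_def algebra_simps)
  qed
  then have Lambda_M: "Lambda_M = {z. poly p z = 0}"
    by (simp add: carlitz_torsion_def)
  have "?q < ?q * ?q"
    using two_le_card_UNIV_field[where 'f='f] by simp
  moreover have "degree (monom (x ^ ?q + x + \<iota> a) ?q + monom (x * x + \<iota> a * x + \<iota> b) 1) \<le> ?q"
    using two_le_card_UNIV_field[where 'f='f]
    by (intro degree_add_le order.trans[OF degree_monom_le]) simp_all
  ultimately have "degree (monom (x ^ ?q + x + \<iota> a) ?q + monom (x * x + \<iota> a * x + \<iota> b) 1) < ?q * ?q"
    by linarith
  then have "degree p = ?q * ?q"
    unfolding p_def by (subst degree_add_eq_left) (simp_all add: degree_monom_eq)
  then have "p \<noteq> 0"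
    using two_le_card_UNIV_field[where 'f='f] by auto
  show "finite Lambda_M"
    unfolding Lambda_M by (rule poly_roots_finite) fact
  show "card Lambda_M \<le> ?q * ?q"
    unfolding Lambda_M using card_poly_roots_bound[OF \<open>p \<noteq> 0\<close>] \<open>degree p = ?q * ?q\<close> by simp
qed

context
  fixes w lam :: 'a
  assumes w_eq: "x * (w ^ CARD('f) - w) = w ^ (CARD('f) + 1) + \<iota> a * w + \<iota> b"
    and lam_eq: "lam ^ (CARD('f) - 1) = w - x"
begin

lemma w_not_fixed: "w ^ CARD('f) \<noteq> w"
proof
  assume fixed: "w ^ CARD('f) = w"
  then obtain c where c: "w = \<iota> c"
    using power_card_eq_self_iff by auto
  have "w ^ (CARD('f) + 1) = w * w"
    using fixed by (simp add: mult.commute)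
  then have "w * w + \<iota> a * w + \<iota> b = 0"
    using w_eq fixed by simp
  moreover have "\<iota> (poly [:b, a, 1:] c) = w * w + \<iota> a * w + \<iota> b"
    by (simp add: c algebra_simps)
  ultimately show False
    using M_root_free hom_eq_0_iff by metis
qed

lemma lam_nonzero: "lam \<noteq> 0"
proof
  assume "lam = 0"
  then have "w = x"
    using lam_eq two_le_card_UNIV_field[where 'f='f] by (simp add: power_0_left)
  then have "poly (map_poly \<iota> [:b, a, 1:]) x = 0"
    using w_eq by (simp add: map_poly_pCons algebra_simps)
  then show False
    using transcendental_x unfolding transcendental_over_def by fastforce
qed

lemma lam_power_card: "lam ^ CARD('f) = lam * (w - x)"
  using lam_eq two_le_card_UNIV_field[where 'f='f]
  by (metis Suc_diff_1 power_Suc less_le_trans pos2)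

lemma carlitz_phi_lam: "carlitz_phi x CARD('f) lam = lam * w"
  by (simp add: carlitz_phi_def lam_power_card algebra_simps)

lemma carlitz_M_lam: "carlitz_M lam = 0"
proof -
  have "carlitz_M lam = lam * (w ^ (CARD('f) + 1) + \<iota> a * w + \<iota> b - x * (w ^ CARD('f) - w))"
    by (simp add: carlitz_M_eq carlitz_phi_lam carlitz_phi_def power_mult_distrib lam_power_card algebra_simps)
  then show ?thesis
    by (simp add: w_eq)
qed

lemma carlitz_M_lam_w: "carlitz_M (lam * w) = 0"
  using carlitz_M_phi[of lam] two_le_card_UNIV_field[where 'f='f]
  unfolding carlitz_phi_lam carlitz_M_lam by (simp add: carlitz_phi_def power_0_left)

lemma Lambda_M_eq: "Lambda_M = (\<lambda>(c, d). \<iota> c * lam + \<iota> d * (lam * w)) ` UNIV"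
proof -
  let ?f = "\<lambda>(c, d). \<iota> c * lam + \<iota> d * (lam * w)"
  have "inj ?f"
  proof (rule injI, clarify)
    fix c d c' d'
    assume "\<iota> c * lam + \<iota> d * (lam * w) = \<iota> c' * lam + \<iota> d' * (lam * w)"
    then have "lam * (\<iota> (c - c') + \<iota> (d - d') * w) = 0"
      by (simp add: algebra_simps)
    then have lin: "\<iota> (c - c') + \<iota> (d - d') * w = 0"
      using lam_nonzero by simp
    have "d = d'"
    proof (rule ccontr)
      assume "d \<noteq> d'"
      then have "\<iota> (d - d') \<noteq> 0"
        using inj_hom by (simp add: inj_eq)
      then have "w = \<iota> ((c' - c) / (d - d'))"
        using lin by (simp only: hom_divide) (simp add: field_simps)
      then show False
        using w_not_fixed power_card_eq_self_iff[of w] rangeI by metis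
    qed
    then show "c = c' \<and> d = d'"
      using lin inj_hom by (simp add: inj_eq)
  qed
  have "range ?f \<subseteq> Lambda_M"
    by (auto simp: carlitz_torsion_def carlitz_M_add carlitz_M_hom_mult carlitz_M_lam carlitz_M_lam_w)
  moreover have "card Lambda_M \<le> card (range ?f)"
    using Lambda_M_finite_card(2) \<open>inj ?f\<close>
    by (simp add: card_image card_cartesian_product flip: UNIV_Times_UNIV)
  ultimately show ?thesis
    using Lambda_M_finite_card(1) by (intro card_seteq[symmetric]) auto
qed

context
  fixes \<gamma> :: 'f
  assumes gamma: "\<gamma> \<noteq> 0"
begin

lemma cyclotomic_ff_eq:
  "cyclotomic_ff \<iota> x CARD('f) [:b, a, 1:] = gen_field (range \<iota> \<union> {w / \<iota> \<gamma>, lam})"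
proof
  let ?G = "gen_field (range \<iota> \<union> {w / \<iota> \<gamma>, lam})"
  have G: "is_subfield ?G"
    by (rule is_subfield_gen_field)
  have hom_G: "\<iota> c \<in> ?G" for c
    by (simp add: subsetD[OF subset_gen_field])
  have v_G: "w / \<iota> \<gamma> \<in> ?G" and lam_G: "lam \<in> ?G"
    by (simp_all add: subsetD[OF subset_gen_field])
  have "\<iota> \<gamma> * (w / \<iota> \<gamma>) \<in> ?G"
    by (rule subfield_mult[OF G hom_G v_G])
  then have w_G: "w \<in> ?G"
    using gamma by simp
  have "x = (w ^ (CARD('f) + 1) + \<iota> a * w + \<iota> b) / (w ^ CARD('f) - w)"
    using w_eq w_not_fixed by (simp add: eq_divide_eq)
  moreover have "w ^ (CARD('f) + 1) + \<iota> a * w + \<iota> b \<in> ?G"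
    by (intro subfield_add[OF G] subfield_mult[OF G] subfield_power[OF G] w_G hom_G)
  moreover have "w ^ CARD('f) - w \<in> ?G"
    by (intro subfield_diff[OF G] subfield_power[OF G] w_G)
  ultimately have "x \<in> ?G"
    using subfield_divide[OF G] by simp
  then have "rat_fun_field \<iota> x \<subseteq> ?G"
    unfolding rat_fun_field_def using hom_G by (intro gen_field_least[OF G]) auto
  moreover have "Lambda_M \<subseteq> ?G"
  proof
    fix z
    assume "z \<in> Lambda_M"
    then obtain c d where "z = \<iota> c * lam + \<iota> d * (lam * w)"
      unfolding Lambda_M_eq by auto
    then show "z \<in> ?G"
      by (simp only: subfield_add[OF G] subfield_mult[OF G] hom_G lam_G w_G)
  qed
  ultimately show "cyclotomic_ff \<iota> x CARD('f) [:b, a, 1:] \<subseteq> ?G"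
    unfolding cyclotomic_ff_def by (intro gen_field_least[OF G] Un_least)
next
  let ?L = "cyclotomic_ff \<iota> x CARD('f) [:b, a, 1:]"
  have L: "is_subfield ?L"
    unfolding cyclotomic_ff_def by (rule is_subfield_gen_field)
  have rat_L: "rat_fun_field \<iota> x \<subseteq> ?L" and "Lambda_M \<subseteq> ?L"
    unfolding cyclotomic_ff_def using subset_gen_field by blast+
  moreover have "lam \<in> Lambda_M"
    using carlitz_M_lam by (simp add: carlitz_torsion_def)
  ultimately have lam_L: "lam \<in> ?L"
    by blast
  have hom_L: "\<iota> c \<in> ?L" and x_L: "x \<in> ?L" for c
    using rat_L subset_gen_field[of "range \<iota> \<union> {x}"] unfolding rat_fun_field_def by blast+
  have "lam ^ (CARD('f) - 1) + x \<in> ?L"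
    by (intro subfield_add[OF L] subfield_power[OF L] lam_L x_L)
  then have "w \<in> ?L"
    unfolding lam_eq by simp
  then have "w / \<iota> \<gamma> \<in> ?L"
    by (rule subfield_divide[OF L _ hom_L])
  then show "gen_field (range \<iota> \<union> {w / \<iota> \<gamma>, lam}) \<subseteq> ?L"
    using hom_L lam_L by (intro gen_field_least[OF L]) auto
qed

lemma transcendental_w_div_gamma: "transcendental_over \<iota> (w / \<iota> \<gamma>)"
proof (rule transcendental_over_if_rational[OF transcendental_x])
  let ?W = "[:0, \<gamma>:]"
  have W: "poly (map_poly \<iota> ?W) (w / \<iota> \<gamma>) = w"
    using gamma by (simp add: map_poly_pCons)
  show "poly (map_poly \<iota> (?W ^ CARD('f) - ?W)) (w / \<iota> \<gamma>) \<noteq> 0"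
    unfolding map_poly_hom_diff map_poly_hom_power poly_diff poly_power W
    using w_not_fixed by simp
  show "x * poly (map_poly \<iota> (?W ^ CARD('f) - ?W)) (w / \<iota> \<gamma>)
      = poly (map_poly \<iota> (?W ^ (CARD('f) + 1) + ?W * [:a:] + [:b:])) (w / \<iota> \<gamma>)"
    unfolding map_poly_hom_add map_poly_hom_diff map_poly_hom_mult map_poly_hom_power
      poly_add poly_diff poly_mult poly_power W
    using w_eq by (simp add: map_poly_pCons mult.commute)
qed

lemma root_free_N_gamma: "poly [:b / \<gamma>, a, \<gamma>:] c \<noteq> 0"
proof -
  have "poly [:b, a, 1:] (\<gamma> * c) = \<gamma> * poly [:b / \<gamma>, a, \<gamma>:] c"
    using gamma by (simp add: field_simps)
  then show ?thesis
    using M_root_free by auto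
qed

lemma eval2_curve_poly_eq_0:
  "eval2 \<iota> (curve_poly (CARD('f) - 1) [:b / \<gamma>, a, \<gamma>:]) (w / \<iota> \<gamma>) lam = 0"
proof -
  define v where "v = w / \<iota> \<gamma>"
  have v_w: "\<iota> \<gamma> * v = w"
    using gamma by (simp add: v_def)
  have "\<iota> \<gamma> * v ^ CARD('f) = (\<iota> \<gamma> * v) ^ CARD('f)"
    by (simp only: power_mult_distrib hom_power_card)
  then have v_power: "\<iota> \<gamma> * v ^ CARD('f) = w ^ CARD('f)"
    by (simp only: v_w)
  have "eval2 \<iota> (curve_poly (CARD('f) - 1) [:b / \<gamma>, a, \<gamma>:]) v lam
      = ((\<iota> \<gamma> * v ^ CARD('f) - \<iota> \<gamma> * v) * lam ^ (CARD('f) - 1)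
         + \<iota> b + \<iota> a * (\<iota> \<gamma> * v) + (\<iota> \<gamma> * v) * (\<iota> \<gamma> * v)) / \<iota> \<gamma>"
    using gamma by (simp add: map_poly_pCons field_simps)
  also have "\<dots> = ((w ^ CARD('f) - w) * (w - x) + \<iota> b + \<iota> a * w + w * w) / \<iota> \<gamma>"
    by (simp only: v_power v_w lam_eq)
  also have "(w ^ CARD('f) - w) * (w - x) + \<iota> b + \<iota> a * w + w * w
      = w ^ (CARD('f) + 1) + \<iota> a * w + \<iota> b - x * (w ^ CARD('f) - w)"
    by (simp add: algebra_simps)
  finally show ?thesis
    by (simp add: v_def w_eq)
qed

end

end

end

theorem proposition3p1:
  fixes \<iota> :: "'f::{finite,field} \<Rightarrow> 'a::alg_closed_field"
    and x :: 'a and a b \<gamma> :: 'f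
  assumes "is_field_hom \<iota>"
    and "transcendental_over \<iota> x"
    and "algebraic_over (rat_fun_field \<iota> x)"
    and "irreducible [:b, a, 1:]"
    and "\<gamma> \<noteq> 0"
  shows "Fq_iso_function_field \<iota>
           (cyclotomic_ff \<iota> x (card (UNIV :: 'f set)) [:b, a, 1:])
           (monom ([:0, 1:] ^ card (UNIV :: 'f set) - [:0, 1:]) (card (UNIV :: 'f set) - 1) + monom [:b / \<gamma>, a, \<gamma>:] 0)"
proof -
  interpret quadratic_carlitz \<iota> x a b
    using assms(1,2,4) by unfold_locales
  obtain w lam where w: "x * (w ^ CARD('f) - w) = w ^ (CARD('f) + 1) + \<iota> a * w + \<iota> b"
    and lam: "lam ^ (CARD('f) - 1) = w - x"
    using alg_closed_carlitz_parameters[OF two_le_card_UNIV_field] .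
  interpret curve_point \<iota> "w / \<iota> \<gamma>" lam "CARD('f) - 1" "[:b / \<gamma>, a, \<gamma>:]"
    using assms(1) transcendental_w_div_gamma[OF w lam assms(5)]
      root_free_N_gamma[OF w lam assms(5)] eval2_curve_poly_eq_0[OF w lam assms(5)]
    by unfold_locales
  have "w / \<iota> \<gamma> \<in> gen_field (range \<iota> \<union> {w / \<iota> \<gamma>, lam})"
    and "lam \<in> gen_field (range \<iota> \<union> {w / \<iota> \<gamma>, lam})"
    by (simp_all add: subsetD[OF subset_gen_field])
  then show ?thesis
    unfolding Fq_iso_function_field_def cyclotomic_ff_eq[OF w lam assms(5)]
    using eval2_eq_0_iff_dvd by blast
qed

end
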